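(* Let $f:\mathbb{R}^d \to \mathbb{R}^K$ be a differentiable classifier, and let $x_{\mathrm{orig}}\in C$ be a point with class $c$. Then for any $\alpha>0$ and any $\beta\in\mathbb{R}$, the output $x_{\mathrm{out}}$ of the FAB-attack algorithm (described in the context) run on the classifier $f$ is the same as its output when run on the classifier $g=\alpha f$ and when run on the classifier $h=f+\beta$ (i.e. $h_r=f_r+\beta$ for every $r=1,\dots,K$). Here all runs use the same inputs $x_{\mathrm{orig}}, c, N_{\mathrm{restarts}}, N_{\mathrm{iter}}, \alpha_{\max}, \beta_{\mathrm{b}}, \eta, \epsilon, p$ and the same random draws for the restarts.
   Context: A classifier $f:\mathbb{R}^d\to\mathbb{R}^K$ assigns $x$ to the class $\arg\max_{r} f_r(x)$. Let $C=\{z\in\mathbb{R}^d: l_i\le z_i\le u_i,\ i=1,\dots,d\}$ be a box, $p\in\{1,2,\infty\}$ and $q$ its dual exponent ($1/p+1/q=1$). For a hyperplane $\pi:\langle w,z\rangle+b=0$ and $x\in C$, define $\mathrm{proj}_p(x,\pi,C)$ as the minimizer of $\|z-x\|_p$ subject to $\langle w,z\rangle+b=0$ and $z\in C$ if this problem is feasible; otherwise, with $\rho=\mathrm{sign}(\langle w,x\rangle+b)$, it is the point $z'$ with $z'_i=l_i$ if $\rho w_i>0$, $z'_i=u_i$ if $\rho w_i<0$, $z'_i=x_i$ if $w_i=0$. Let $\mathrm{proj}_C$ denote componentwise clipping onto $C$. For a point $x$ and classes $l\ne c$, let $\pi_l$ be the hyperplane $\{z: f_l(x)-f_c(x)+\langle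 \nabla f_l(x)-\nabla f_c(x), z-x\rangle=0\}$. FAB-attack (inputs: $x_{\mathrm{orig}}$, class $c$, integers $N_{\mathrm{restarts}},N_{\mathrm{iter}}$, $\alpha_{\max}\in[0,1]$, $\beta_{\mathrm{b}}\in(0,1)$, $\eta\ge 1$, $\epsilon>0$, $p$): set $u=+\infty$. For $j=1,\dots,N_{\mathrm{restarts}}$: if $j=1$ set $x^{(0)}=x_{\mathrm{orig}}$, else sample $x^{(0)}$ randomly with $\|x^{(0)}-x_{\mathrm{orig}}\|_p=\min\{u,\epsilon\}/2$. For $i=0,\dots,N_{\mathrm{iter}}-1$: compute $s=\arg\min_{l\ne c}\frac{|f_l(x^{(i)})-f_c(x^{(i)})|}{\|\nabla f_l(x^{(i)})-\nabla f_c(x^{(i)})\|_q}$ and the hyperplane $\pi_s$ at $x^{(i)}$; set $\delta^{(i)}=\mathrm{proj}_p(x^{(i)},\pi_s,C)-x^{(i)}$, $\delta^{(i)}_{\mathrm{orig}}=\mathrm{proj}_p(x_{\mathrm{orig}},\pi_s,C)-x_{\mathrm{orig}}$, $a=\min\{\|\delta^{(i)}\|_p/(\|\delta^{(i)}\|_p+\|\delta^{(i)}_{\mathrm{orig}}\|_p),\alpha_{\max}\}$, and $x^{(i+1)}=\mathrm{proj}_C\big((1-a)(x^{(i)}+\eta\delta^{(i)})+a(x_{\mathrm{orig}}+\eta\delta^{(i)}_{\mathrm{orig}})\big)$. If $x^{(i+1)}$ is not classified as $c$: if $\|x^{(i+1)}-x_{\mathrm{orig}}\|_p<u$, set $x_{\mathrm{out}}=x^{(i+1)}$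 and $u=\|x^{(i+1)}-x_{\mathrm{orig}}\|_p$; then set $x^{(i+1)}\leftarrow(1-\beta_{\mathrm{b}})x_{\mathrm{orig}}+\beta_{\mathrm{b}}x^{(i+1)}$. Finally, perform 3 steps of final search on $x_{\mathrm{out}}$: with $s\ne c$ the class assigned to $x_{\mathrm{out}}$, and writing $\phi=f_s-f_c$, set $x_{\mathrm{temp}}=x_{\mathrm{out}}-\frac{\phi(x_{\mathrm{out}})(x_{\mathrm{out}}-x_{\mathrm{orig}})}{\phi(x_{\mathrm{out}})+\phi(x_{\mathrm{orig}})}$, and replace $x_{\mathrm{out}}$ by $x_{\mathrm{temp}}$ in this formula if $\phi(x_{\mathrm{temp}})>0$, or replace $x_{\mathrm{orig}}$ by $x_{\mathrm{temp}}$ in this formula if $\phi(x_{\mathrm{temp}})<0$. The output is $x_{\mathrm{out}}$. *)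

theory Defs
  imports "HOL-Analysis.Analysis"
begin

datatype pexp = P1 | P2 | PInf

fun dual_exp :: "pexp \<Rightarrow> pexp" where
  "dual_exp P1 = PInf" | "dual_exp P2 = P2" | "dual_exp PInf = P1"

definition pnorm :: "pexp \<Rightarrow> real^'d \<Rightarrow> real" where
  "pnorm p x = (case p of
      P1 \<Rightarrow> (\<Sum>i\<in>UNIV. \<bar>x$i\<bar>)
    | P2 \<Rightarrow> norm x
    | PInf \<Rightarrow> Max ((\<lambda>i. \<bar>x$i\<bar>) ` UNIV))"

definition box_set :: "real^'d \<Rightarrow> real^'d \<Rightarrow> (real^'d) set" where
  "box_set lo up = {z. \<forall>i. lo$i \<le> z$i \<and> z$i \<le> up$i}"

definition clip :: "real^'d \<Rightarrow> real^'d \<Rightarrow> real^'d \<Rightarrow> real^'d" where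
  "clip lo up z = (\<chi> i. min (up$i) (max (lo$i) (z$i)))"

text \<open>proj_p(x, pi, C) for the hyperplane pi: <w,z> + b = 0. "The minimizer" is
  selected by Hilbert choice among all minimizers (a choice depending only on the
  feasible set and the point x).\<close>
definition proj :: "pexp \<Rightarrow> real^'d \<Rightarrow> real^'d \<Rightarrow> real \<Rightarrow> real^'d \<Rightarrow> real^'d \<Rightarrow> real^'d" where
  "proj p x w b lo up =
     (let F = {z. inner w z + b = 0 \<and> z \<in> box_set lo up} in
      if F \<noteq> {} then (SOME z. z \<in> F \<and> (\<forall>z'\<in>F. pnorm p (z - x) \<le> pnorm p (z' - x)))
      else (let \<rho> = sgn (inner w x + b) in
            (\<chi> i. if \<rho> * w$i > 0 then lo$i else if \<rho> * w$i < 0 then up$i else x$i)))"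

definition grad :: "(real^'d \<Rightarrow> real) \<Rightarrow> real^'d \<Rightarrow> real^'d" where
  "grad F x = (\<chi> i. frechet_derivative F (at x) (axis i 1))"

text \<open>Classifier with classes 1..K: f r x is the r-th output. The assigned class is
  the argmax (smallest index in case of ties).\<close>
definition classify :: "(nat \<Rightarrow> real^'d \<Rightarrow> real) \<Rightarrow> nat \<Rightarrow> real^'d \<Rightarrow> nat" where
  "classify f K x = (LEAST r. r \<in> {1..K} \<and> (\<forall>r'\<in>{1..K}. f r' x \<le> f r x))"

definition lin_ratio :: "(nat \<Rightarrow> real^'d \<Rightarrow> real) \<Rightarrow> nat \<Rightarrow> pexp \<Rightarrow> nat \<Rightarrow> real^'d \<Rightarrow> real" where
  "lin_ratio f c p l x =
     \<bar>f l x - f c x\<bar> / pnorm (dual_exp p) (grad (f l) x - grad (f c) x)"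

definition sel_class :: "(nat \<Rightarrow> real^'d \<Rightarrow> real) \<Rightarrow> nat \<Rightarrow> nat \<Rightarrow> pexp \<Rightarrow> real^'d \<Rightarrow> nat" where
  "sel_class f K c p x = (LEAST l. l \<in> {1..K} \<and> l \<noteq> c \<and>
      (\<forall>l'\<in>{1..K}. l' \<noteq> c \<longrightarrow> lin_ratio f c p l x \<le> lin_ratio f c p l' x))"

definition hyp_w :: "(nat \<Rightarrow> real^'d \<Rightarrow> real) \<Rightarrow> nat \<Rightarrow> nat \<Rightarrow> real^'d \<Rightarrow> real^'d" where
  "hyp_w f c s x = grad (f s) x - grad (f c) x"

definition hyp_b :: "(nat \<Rightarrow> real^'d \<Rightarrow> real) \<Rightarrow> nat \<Rightarrow> nat \<Rightarrow> real^'d \<Rightarrow> real" where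
  "hyp_b f c s x = f s x - f c x - inner (hyp_w f c s x) x"

text \<open>One inner iteration; state = (current iterate x^(i), bound u, current x_out).\<close>
definition fab_step ::
  "(nat \<Rightarrow> real^'d \<Rightarrow> real) \<Rightarrow> nat \<Rightarrow> nat \<Rightarrow> pexp \<Rightarrow> real^'d \<Rightarrow> real^'d \<Rightarrow>
   real \<Rightarrow> real \<Rightarrow> real \<Rightarrow> real^'d \<Rightarrow>
   ((real^'d) \<times> ereal \<times> (real^'d) option) \<Rightarrow> ((real^'d) \<times> ereal \<times> (real^'d) option)" where
  "fab_step f K c p lo up amax eta bb xo st =
     (let x = fst st; ub = fst (snd st); xout = snd (snd st);
            s = sel_class f K c p x;
            w = hyp_w f c s x; b = hyp_b f c s x;
            d = proj p x w b lo up - x;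
            dorig = proj p xo w b lo up - xo;
            a = min (pnorm p d / (pnorm p d + pnorm p dorig)) amax;
            x' = clip lo up ((1 - a) *\<^sub>R (x + eta *\<^sub>R d) + a *\<^sub>R (xo + eta *\<^sub>R dorig))
        in if classify f K x' \<noteq> c then
             (if ereal (pnorm p (x' - xo)) < ub
              then ((1 - bb) *\<^sub>R xo + bb *\<^sub>R x', ereal (pnorm p (x' - xo)), Some x')
              else ((1 - bb) *\<^sub>R xo + bb *\<^sub>R x', ub, xout))
           else (x', ub, xout))"

text \<open>One restart j; draw j r is the random starting point (the same draws are used in
  every run), required to satisfy pnorm p (draw j r - x_orig) = r.\<close>
definition fab_restart ::
  "(nat \<Rightarrow> real^'d \<Rightarrow> real) \<Rightarrow> nat \<Rightarrow> nat \<Rightarrow> pexp \<Rightarrow> real^'d \<Rightarrow> real^'d \<Rightarrow>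
   nat \<Rightarrow> real \<Rightarrow> real \<Rightarrow> real \<Rightarrow> real \<Rightarrow> (nat \<Rightarrow> real \<Rightarrow> real^'d) \<Rightarrow> real^'d \<Rightarrow> nat \<Rightarrow>
   (ereal \<times> (real^'d) option) \<Rightarrow> (ereal \<times> (real^'d) option)" where
  "fab_restart f K c p lo up Ni amax eta bb eps draw xo j st =
     (let ub = fst st; xout = snd st;
            x0 = (if j = 1 then xo else draw j (real_of_ereal (min ub (ereal eps)) / 2));
            res = (fab_step f K c p lo up amax eta bb xo ^^ Ni) (x0, ub, xout)
        in (fst (snd res), snd (snd res)))"

definition final_search ::
  "(nat \<Rightarrow> real^'d \<Rightarrow> real) \<Rightarrow> nat \<Rightarrow> nat \<Rightarrow> real^'d \<Rightarrow> real^'d \<Rightarrow> real^'d" where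
  "final_search f K c xo xout =
     (let s = classify f K xout;
          \<phi> = (\<lambda>y. f s y - f c y);
          stp = (\<lambda>(a, b). let t = a - (\<phi> a / (\<phi> a + \<phi> b)) *\<^sub>R (a - b) in
                   if \<phi> t > 0 then (t, b) else if \<phi> t < 0 then (a, t) else (a, b))
      in fst ((stp ^^ 3) (xout, xo)))"

text \<open>FAB-attack. Result None means no point with a class different from c was found
  (x_out is never assigned); otherwise Some x_out.\<close>
definition fab_attack ::
  "(nat \<Rightarrow> real^'d \<Rightarrow> real) \<Rightarrow> nat \<Rightarrow> real^'d \<Rightarrow> real^'d \<Rightarrow> real^'d \<Rightarrow> nat \<Rightarrow>
   nat \<Rightarrow> nat \<Rightarrow> real \<Rightarrow> real \<Rightarrow> real \<Rightarrow> real \<Rightarrow> pexp \<Rightarrow> (nat \<Rightarrow> real \<Rightarrow> real^'d) \<Rightarrow>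
   (real^'d) option" where
  "fab_attack f K lo up xo c Nr Ni amax bb eta eps p draw =
     (let res = fold (fab_restart f K c p lo up Ni amax eta bb eps draw xo) [1..<Nr+1] (\<infinity>, None)
      in map_option (final_search f K c xo) (snd res))"

end

theory Submission
  imports Defs
begin

(* Replacing every output f_r by alpha f_r + beta with alpha > 0 leaves all argmax decisions
   unchanged and multiplies every difference f_l - f_c, together with its gradient, by alpha.
   Every quantity the attack computes from the classifier is invariant under this: the ratios
   selecting the closest hyperplane (norms are positively homogeneous), the hyperplanes pi_l
   (an equation scaled by a nonzero factor), and the quotient and signs of phi in the final
   search. Hence every iterate, and the output, coincides. *)

lemma pnorm_scaleR: "pnorm p (k *\<^sub>R v) = \<bar>k\<bar> * pnorm p v"
proof (cases p)
  case P1
  then show ?thesis by (simp add: pnorm_def abs_mult sum_distrib_left)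
next
  case P2
  then show ?thesis by (simp add: pnorm_def)
next
  case PInf
  have "mono (\<lambda>t::real. \<bar>k\<bar> * t)" by (simp add: mono_def mult_left_mono)
  moreover have "(\<lambda>i. \<bar>(k *\<^sub>R v) $ i\<bar>) ` UNIV = (\<lambda>t. \<bar>k\<bar> * t) ` ((\<lambda>i. \<bar>v $ i\<bar>) ` UNIV)"
    by (auto simp: abs_mult image_image)
  ultimately show ?thesis
    using PInf mono_Max_commute[of "\<lambda>t. \<bar>k\<bar> * t" "(\<lambda>i. \<bar>v $ i\<bar>) ` UNIV"]
    by (simp add: pnorm_def)
qed

lemma proj_scale_hyperplane:
  assumes "k \<noteq> 0"
  shows "proj p x (k *\<^sub>R w) (k * b) lo up = proj p x w b lo up"
proof -
  have eq: "inner (k *\<^sub>R w) z + k * b = k * (inner w z + b)" for z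
    by (simp add: algebra_simps)
  have "inner (k *\<^sub>R w) z + k * b = 0 \<longleftrightarrow> inner w z + b = 0" for z
    unfolding eq using assms by simp
  then have feasible: "{z. inner (k *\<^sub>R w) z + k * b = 0 \<and> z \<in> box_set lo up}
        = {z. inner w z + b = 0 \<and> z \<in> box_set lo up}"
    by simp
  \<comment> \<open>the side \<rho> flips with the sign of k, and so does every entry of k w\<close>
  have side: "sgn (k * a) * (k *\<^sub>R w) $ i = \<bar>k\<bar> * (sgn a * w $ i)" for a i
    by (simp add: sgn_mult abs_sgn)
  have pos: "0 < \<bar>k\<bar> * t \<longleftrightarrow> 0 < t" and neg: "\<bar>k\<bar> * t < 0 \<longleftrightarrow> t < 0" for t :: real
    using assms by (simp_all add: zero_less_mult_iff mult_less_0_iff)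
  show ?thesis
    unfolding proj_def Let_def feasible unfolding eq side pos neg ..
qed

lemma grad_affine:
  assumes "F differentiable (at x)"
  shows "grad (\<lambda>y. k * F y + \<beta>) x = k *\<^sub>R grad F x"
proof -
  have "(F has_derivative frechet_derivative F (at x)) (at x)"
    using assms frechet_derivative_works by blast
  then have "((\<lambda>y. k * F y + \<beta>) has_derivative (\<lambda>h. k * frechet_derivative F (at x) h)) (at x)"
    by (intro has_derivative_add_const has_derivative_mult_right)
  then have "frechet_derivative (\<lambda>y. k * F y + \<beta>) (at x) = (\<lambda>h. k * frechet_derivative F (at x) h)"
    by (metis frechet_derivative_at)
  then show ?thesis
    unfolding grad_def by (simp add: vec_eq_iff)
qed

lemma classify_affine:
  assumes "0 < k"
  shows "classify (\<lambda>r x. k * f r x + \<beta>) K = classify f K"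
  using assms unfolding classify_def by (simp add: mult_le_cancel_left_pos)

lemma sel_class_in_range:
  assumes "2 \<le> K" "c \<in> {1..K}"
  shows "sel_class f K c p x \<in> {1..K}"
proof -
  let ?S = "{1..K} - {c}" and ?g = "\<lambda>l. lin_ratio f c p l x"
  have "(if c = 1 then 2 else 1) \<in> ?S"
    using assms by auto
  then obtain l where "l \<in> ?S" "?g l = Min (?g ` ?S)"
    using Min_in[of "?g ` ?S"] by fastforce
  then have "l \<in> {1..K} \<and> l \<noteq> c \<and> (\<forall>l'\<in>{1..K}. l' \<noteq> c \<longrightarrow> ?g l \<le> ?g l')"
    by simp
  then show ?thesis
    unfolding sel_class_def by (rule LeastI2) simp
qed

lemma hyp_w_affine:
  assumes "\<forall>r\<in>{1..K}. \<forall>x. f r differentiable (at x)" "c \<in> {1..K}" "s \<in> {1..K}"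
  shows "hyp_w (\<lambda>r x. k * f r x + \<beta>) c s x = k *\<^sub>R hyp_w f c s x"
  using assms by (simp add: hyp_w_def grad_affine scaleR_diff_right)

lemma hyp_b_affine:
  assumes "\<forall>r\<in>{1..K}. \<forall>x. f r differentiable (at x)" "c \<in> {1..K}" "s \<in> {1..K}"
  shows "hyp_b (\<lambda>r x. k * f r x + \<beta>) c s x = k * hyp_b f c s x"
  using hyp_w_affine[OF assms] by (simp add: hyp_b_def algebra_simps)

lemma lin_ratio_affine:
  assumes "\<forall>r\<in>{1..K}. \<forall>x. f r differentiable (at x)" "c \<in> {1..K}" "l \<in> {1..K}"
    and "0 < k"
  shows "lin_ratio (\<lambda>r x. k * f r x + \<beta>) c p l x = lin_ratio f c p l x"
proof -
  have "k * f l x + \<beta> - (k * f c x + \<beta>) = k * (f l x - f c x)"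
    by (simp add: algebra_simps)
  moreover have "grad (\<lambda>x. k * f l x + \<beta>) x - grad (\<lambda>x. k * f c x + \<beta>) x
      = k *\<^sub>R (grad (f l) x - grad (f c) x)"
    using assms by (simp add: grad_affine scaleR_diff_right)
  ultimately show ?thesis
    using \<open>0 < k\<close> by (simp add: lin_ratio_def pnorm_scaleR abs_mult)
qed

lemma sel_class_affine:
  assumes "\<forall>r\<in>{1..K}. \<forall>x. f r differentiable (at x)" "c \<in> {1..K}" "0 < k"
  shows "sel_class (\<lambda>r x. k * f r x + \<beta>) K c p x = sel_class f K c p x"
proof -
  have "(l \<in> {1..K} \<and> l \<noteq> c \<and> (\<forall>l'\<in>{1..K}. l' \<noteq> c \<longrightarrow>
          lin_ratio (\<lambda>r x. k * f r x + \<beta>) c p l x \<le> lin_ratio (\<lambda>r x. k * f r x + \<beta>) c p l' x))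
      \<longleftrightarrow> (l \<in> {1..K} \<and> l \<noteq> c \<and> (\<forall>l'\<in>{1..K}. l' \<noteq> c \<longrightarrow>
          lin_ratio f c p l x \<le> lin_ratio f c p l' x))" for l
    using lin_ratio_affine[OF assms(1,2) _ assms(3)] by auto
  then show ?thesis
    unfolding sel_class_def by simp
qed

lemma fab_step_affine:
  fixes f :: "nat \<Rightarrow> real^'d \<Rightarrow> real"
  assumes "\<forall>r\<in>{1..K}. \<forall>x. f r differentiable (at x)" "2 \<le> K" "c \<in> {1..K}" "0 < k"
  shows "fab_step (\<lambda>r x. k * f r x + \<beta>) K c p lo up amax eta bb xo
       = fab_step f K c p lo up amax eta bb xo"
proof
  fix st :: "(real^'d) \<times> ereal \<times> (real^'d) option"
  have s: "sel_class f K c p (fst st) \<in> {1..K}"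
    using sel_class_in_range[OF assms(2,3)] .
  show "fab_step (\<lambda>r x. k * f r x + \<beta>) K c p lo up amax eta bb xo st
      = fab_step f K c p lo up amax eta bb xo st"
    unfolding fab_step_def Let_def sel_class_affine[OF assms(1,3,4)] classify_affine[OF \<open>0 < k\<close>]
      hyp_w_affine[OF assms(1,3) s] hyp_b_affine[OF assms(1,3) s]
      proj_scale_hyperplane[OF less_imp_neq[OF \<open>0 < k\<close>, symmetric]] ..
qed

lemma final_search_affine:
  assumes "0 < k"
  shows "final_search (\<lambda>r x. k * f r x + \<beta>) K c xo = final_search f K c xo"
proof
  fix xout
  have phi: "k * f s y + \<beta> - (k * f c y + \<beta>) = k * (f s y - f c y)" for s y
    by (simp add: algebra_simps)
  have ratio: "(k * A) / (k * A + k * B) = A / (A + B)" for A B :: real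
    using \<open>0 < k\<close> by (simp add: distrib_left[symmetric])
  have signs: "0 < k * A \<longleftrightarrow> 0 < A" "k * A < 0 \<longleftrightarrow> A < 0" for A :: real
    using \<open>0 < k\<close> by (simp_all add: zero_less_mult_iff mult_less_0_iff)
  show "final_search (\<lambda>r x. k * f r x + \<beta>) K c xo xout = final_search f K c xo xout"
    unfolding final_search_def Let_def classify_affine[OF \<open>0 < k\<close>] phi ratio signs ..
qed

lemma fab_attack_affine:
  assumes "\<forall>r\<in>{1..K}. \<forall>x. f r differentiable (at x)" "2 \<le> K" "c \<in> {1..K}" "0 < k"
  shows "fab_attack (\<lambda>r x. k * f r x + \<beta>) K lo up xo c Nr Ni amax bb eta eps p draw
       = fab_attack f K lo up xo c Nr Ni amax bb eta eps p draw"
proof -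
  have "fab_restart (\<lambda>r x. k * f r x + \<beta>) K c p lo up Ni amax eta bb eps draw xo
      = fab_restart f K c p lo up Ni amax eta bb eps draw xo"
    unfolding fab_restart_def fab_step_affine[OF assms] ..
  then show ?thesis
    using assms by (simp add: fab_attack_def final_search_affine)
qed

theorem proposition1:
  fixes f :: "nat \<Rightarrow> real^'d \<Rightarrow> real"
    and K c Nr Ni :: nat
    and lo up xo :: "real^'d"
    and amax bb eta eps \<alpha> \<beta> :: real
    and p :: pexp
    and draw :: "nat \<Rightarrow> real \<Rightarrow> real^'d"
  assumes "2 \<le> K" and "c \<in> {1..K}"
    and "\<forall>r\<in>{1..K}. \<forall>x. f r differentiable (at x)"
    and "xo \<in> box_set lo up"
    and "classify f K xo = c"
    and "0 \<le> amax" and "amax \<le> 1"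
    and "0 < bb" and "bb < 1"
    and "1 \<le> eta" and "0 < eps"
    and "\<forall>j r. 0 \<le> r \<longrightarrow> pnorm p (draw j r - xo) = r"
    and "0 < \<alpha>"
  shows "fab_attack (\<lambda>r x. \<alpha> * f r x) K lo up xo c Nr Ni amax bb eta eps p draw
           = fab_attack f K lo up xo c Nr Ni amax bb eta eps p draw
       \<and> fab_attack (\<lambda>r x. f r x + \<beta>) K lo up xo c Nr Ni amax bb eta eps p draw
           = fab_attack f K lo up xo c Nr Ni amax bb eta eps p draw"
proof
  \<comment> \<open>only differentiability, 2 \<le> K, c \<in> {1..K} and 0 < \<alpha> are needed\<close>
  show "fab_attack (\<lambda>r x. \<alpha> * f r x) K lo up xo c Nr Ni amax bb eta eps p draw
      = fab_attack f K lo up xo c Nr Ni amax bb eta eps p draw"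
    using fab_attack_affine[OF assms(3,1,2,13), where \<beta> = 0] by simp
  show "fab_attack (\<lambda>r x. f r x + \<beta>) K lo up xo c Nr Ni amax bb eta eps p draw
      = fab_attack f K lo up xo c Nr Ni amax bb eta eps p draw"
    using fab_attack_affine[OF assms(3,1,2), where k = 1] by simp
qed

end
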